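(* Let $G=(V,A)$ be a weighted digraph with $V=\{1,\dots,n\}$, positive arc weights and every vertex of positive degree, and fix $p\in[1,\infty]$. Let $\Omega=\Omega_p^1\cup\Omega_p^2$ where $\Omega_p^1=\{\mathbf{x}\in\mathbb{R}^n:\max_i x_i+\min_i x_i=0,\ \|\mathbf{x}\|_p=1\}$ and $\Omega_p^2=\{\mathbf{x}\in\mathbb{R}^n:\min_i|x_i|=0,\ \|\mathbf{x}\|_p=1\}$. Starting from $\mathbf{x}^1\in\Omega$ and $r^1=r(\mathbf{x}^1)$, define iteratively $$\mathbf{x}^{k+1}\in\operatorname*{argmin}_{\mathbf{x}\in\Omega}\big\{\|\mathbf{x}\|_\infty-Q_{r^k}(\mathbf{x})\big\},\qquad r^{k+1}=r(\mathbf{x}^{k+1}).$$ Then the sequence $\{r^k\}$ converges to the global minimum $r_{\min}=\min_{\mathbf{x}\in\mathbb{R}^n\setminus\{t\mathbf{1}:t\in\mathbb{R}\}} r(\mathbf{x})$.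
   Context: For a vertex $v$, $d_v^+$ and $d_v^-$ are the total weights of arcs leaving and entering $v$; $d_v=d_v^++d_v^-$, $d_v^\delta=d_v^+-d_v^-$, $\mathrm{Vol}(V)=\sum_{v}d_v$. For $\mathbf{x}\in\mathbb{R}^n$: $I^+(\mathbf{x})=\sum_{i\to j\in A}w_{ij}|x_i+x_j|$, $J(\mathbf{x})=|\sum_{i\in V}d_i^\delta x_i|$, $N(\mathbf{x})=\min_{c\in\mathbb{R}}\sum_{i\in V}d_i|x_i-c|$; for non-constant $\mathbf{x}$, $r(\mathbf{x})=\frac{\mathrm{Vol}(V)\|\mathbf{x}\|_\infty-I^+(\mathbf{x})-J(\mathbf{x})}{2N(\mathbf{x})}$; and for $r\in\mathbb{R}$, $Q_r(\mathbf{x})=\frac{I^+(\mathbf{x})+J(\mathbf{x})+2rN(\mathbf{x})}{\mathrm{Vol}(V)}$. (Vectors in $\Omega$ are non-constant.) *)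

theory Defs
  imports "HOL-Analysis.Analysis"
begin

text \<open>Weighted digraph on the finite vertex type 'n (V = UNIV, n = CARD('n)),
  arc set A, weight w i j of the arc i -> j. Vectors are real^'n.\<close>

definition outdeg :: "('n::finite \<times> 'n) set \<Rightarrow> ('n \<Rightarrow> 'n \<Rightarrow> real) \<Rightarrow> 'n \<Rightarrow> real" where
  "outdeg A w v = (\<Sum>j\<in>{j. (v, j) \<in> A}. w v j)"

definition indeg :: "('n::finite \<times> 'n) set \<Rightarrow> ('n \<Rightarrow> 'n \<Rightarrow> real) \<Rightarrow> 'n \<Rightarrow> real" where
  "indeg A w v = (\<Sum>i\<in>{i. (i, v) \<in> A}. w i v)"

definition deg :: "('n::finite \<times> 'n) set \<Rightarrow> ('n \<Rightarrow> 'n \<Rightarrow> real) \<Rightarrow> 'n \<Rightarrow> real" where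
  "deg A w v = outdeg A w v + indeg A w v"

definition degdelta :: "('n::finite \<times> 'n) set \<Rightarrow> ('n \<Rightarrow> 'n \<Rightarrow> real) \<Rightarrow> 'n \<Rightarrow> real" where
  "degdelta A w v = outdeg A w v - indeg A w v"

definition vol :: "('n::finite \<times> 'n) set \<Rightarrow> ('n \<Rightarrow> 'n \<Rightarrow> real) \<Rightarrow> real" where
  "vol A w = (\<Sum>v\<in>UNIV. deg A w v)"

definition Iplus :: "('n::finite \<times> 'n) set \<Rightarrow> ('n \<Rightarrow> 'n \<Rightarrow> real) \<Rightarrow> real^'n \<Rightarrow> real" where
  "Iplus A w x = (\<Sum>(i, j)\<in>A. w i j * \<bar>x$i + x$j\<bar>)"

definition Jf :: "('n::finite \<times> 'n) set \<Rightarrow> ('n \<Rightarrow> 'n \<Rightarrow> real) \<Rightarrow> real^'n \<Rightarrow> real" where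
  "Jf A w x = \<bar>\<Sum>i\<in>UNIV. degdelta A w i * x$i\<bar>"

text \<open>N(x) = min over c of sum d_i |x_i - c| (the minimum is attained, so it equals the infimum).\<close>
definition Nf :: "('n::finite \<times> 'n) set \<Rightarrow> ('n \<Rightarrow> 'n \<Rightarrow> real) \<Rightarrow> real^'n \<Rightarrow> real" where
  "Nf A w x = (INF c::real. (\<Sum>i\<in>UNIV. deg A w i * \<bar>x$i - c\<bar>))"

definition supnorm :: "real^'n::finite \<Rightarrow> real" where
  "supnorm x = Max (range (\<lambda>i. \<bar>x$i\<bar>))"

definition pnorm :: "ereal \<Rightarrow> real^'n::finite \<Rightarrow> real" where
  "pnorm p x = (if p = \<infinity> then supnorm x
                else (\<Sum>i\<in>UNIV. \<bar>x$i\<bar> powr (real_of_ereal p)) powr (1 / real_of_ereal p))"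

definition rf :: "('n::finite \<times> 'n) set \<Rightarrow> ('n \<Rightarrow> 'n \<Rightarrow> real) \<Rightarrow> real^'n \<Rightarrow> real" where
  "rf A w x = (vol A w * supnorm x - Iplus A w x - Jf A w x) / (2 * Nf A w x)"

definition Qf :: "('n::finite \<times> 'n) set \<Rightarrow> ('n \<Rightarrow> 'n \<Rightarrow> real) \<Rightarrow> real \<Rightarrow> real^'n \<Rightarrow> real" where
  "Qf A w r x = (Iplus A w x + Jf A w x + 2 * r * Nf A w x) / vol A w"

definition nonconstant :: "real^'n::finite \<Rightarrow> bool" where
  "nonconstant x \<longleftrightarrow> (\<nexists>t. x = (\<chi> i. t))"

definition Omega1 :: "ereal \<Rightarrow> (real^'n::finite) set" where
  "Omega1 p = {x. Max (range (\<lambda>i. x$i)) + Min (range (\<lambda>i. x$i)) = 0 \<and> pnorm p x = 1}"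

definition Omega2 :: "ereal \<Rightarrow> (real^'n::finite) set" where
  "Omega2 p = {x. Min (range (\<lambda>i. \<bar>x$i\<bar>)) = 0 \<and> pnorm p x = 1}"

definition Omega :: "ereal \<Rightarrow> (real^'n::finite) set" where
  "Omega p = Omega1 p \<union> Omega2 p"

end

theory Submission
  imports Defs
begin

text \<open>
  For nonconstant x one has supnorm x - Q_r(x) = delta(x) * (r(x) - r) with delta = 2N/Vol, so the
  iteration is Dinkelbach's method for the ratio r. On \<Omega> the weight delta is positive and at
  most 2, and comparing the minimiser x_(k+1) with a global minimiser z of r lying in \<Omega> gives
  r_(k+1) - r_min \<le> (1 - delta(z)/2) * (r_k - r_min), i.e. linear convergence.

  The minimiser exists because r is invariant under scaling and does not increase when a vector
  is centred at the midpoint of its range; hence r attains its infimum on the compact set of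
  vectors whose range is exactly [-1, 1], and rescaling that minimiser puts it into \<Omega>1.
\<close>

section \<open>Dinkelbach iteration\<close>

lemma LIMSEQ_contraction_zero:
  fixes e :: "nat \<Rightarrow> real"
  assumes nonneg: "\<And>k. 0 \<le> e k" and contraction: "\<And>k. e (Suc k) \<le> c * e k"
    and "0 \<le> c" and "c < 1"
  shows "e \<longlonglongrightarrow> 0"
proof -
  have bound: "e k \<le> c ^ k * e 0" for k
  proof (induction k)
    case 0
    show ?case by simp
  next
    case (Suc k)
    have "e (Suc k) \<le> c * e k" by (fact contraction)
    also have "\<dots> \<le> c * (c ^ k * e 0)" using Suc.IH \<open>0 \<le> c\<close> by (rule mult_left_mono)
    finally show ?case by (simp add: mult.assoc)
  qed
  have lim: "(\<lambda>k. c ^ k * e 0) \<longlonglongrightarrow> 0"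
    using assms(3,4) by (intro tendsto_mult_left_zero LIMSEQ_power_zero) simp
  show ?thesis
  proof (rule tendsto_sandwich[OF _ _ tendsto_const lim])
    show "\<forall>\<^sub>F k in sequentially. 0 \<le> e k" using nonneg by simp
    show "\<forall>\<^sub>F k in sequentially. e k \<le> c ^ k * e 0" using bound by simp
  qed
qed

lemma dinkelbach_LIMSEQ:
  fixes \<rho> \<delta> :: "'a \<Rightarrow> real" and \<phi> :: "real \<Rightarrow> 'a \<Rightarrow> real" and xs :: "nat \<Rightarrow> 'a"
  assumes objective: "\<And>r x. x \<in> S \<Longrightarrow> \<phi> r x = \<delta> x * (\<rho> x - r)"
    and \<delta>_pos: "\<And>x. x \<in> S \<Longrightarrow> 0 < \<delta> x" and \<delta>_le: "\<And>x. x \<in> S \<Longrightarrow> \<delta> x \<le> D"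
    and "z \<in> S" and z_min: "\<And>x. x \<in> S \<Longrightarrow> \<rho> z \<le> \<rho> x"
    and init: "xs 1 \<in> S"
    and iter: "\<forall>k\<ge>1. is_arg_min (\<phi> (\<rho> (xs k))) (\<lambda>x. x \<in> S) (xs (Suc k))"
  shows "(\<lambda>k. \<rho> (xs k)) \<longlonglongrightarrow> \<rho> z"
proof -
  have in_S: "xs k \<in> S" if "1 \<le> k" for k
    using that
  proof (induction k rule: dec_induct)
    case base
    show ?case by (fact init)
  next
    case (step k)
    then show ?case using iter by (simp add: is_arg_min_def)
  qed
  define e where "e k = \<rho> (xs (Suc k)) - \<rho> z" for k
  define c where "c = 1 - \<delta> z / D"
  have "0 < D" using \<delta>_pos \<delta>_le \<open>z \<in> S\<close> by (meson less_le_trans)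
  have e_nonneg: "0 \<le> e k" for k using z_min in_S by (simp add: e_def)
  have "e (Suc k) \<le> c * e k" for k
  proof -
    let ?x = "xs (Suc k)" and ?x' = "xs (Suc (Suc k))"
    have x: "?x \<in> S" "?x' \<in> S" by (simp_all add: in_S)
    have "\<phi> (\<rho> ?x) ?x' \<le> \<phi> (\<rho> ?x) z"
      using iter \<open>z \<in> S\<close> by (simp add: is_arg_min_linorder)
    then have gain: "\<delta> z * e k \<le> \<delta> ?x' * (e k - e (Suc k))"
      by (simp add: objective x \<open>z \<in> S\<close> e_def algebra_simps)
    moreover have "0 \<le> \<delta> z * e k"
      using \<delta>_pos[OF \<open>z \<in> S\<close>] e_nonneg by simp
    ultimately have "0 \<le> \<delta> ?x' * (e k - e (Suc k))" by linarith
    then have "0 \<le> e k - e (Suc k)"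
      using \<delta>_pos[OF x(2)] by (simp add: zero_le_mult_iff)
    then have "\<delta> ?x' * (e k - e (Suc k)) \<le> D * (e k - e (Suc k))"
      using \<delta>_le[OF x(2)] by (rule mult_right_mono[rotated])
    with gain have "\<delta> z * e k \<le> D * (e k - e (Suc k))" by linarith
    with \<open>0 < D\<close> show ?thesis by (simp add: c_def field_simps)
  qed
  moreover have "0 \<le> c" "c < 1"
    using \<delta>_pos \<delta>_le \<open>z \<in> S\<close> \<open>0 < D\<close> by (simp_all add: c_def field_simps)
  ultimately have "e \<longlonglongrightarrow> 0" using e_nonneg by (intro LIMSEQ_contraction_zero)
  then have "(\<lambda>k. \<rho> (xs (Suc k))) \<longlonglongrightarrow> \<rho> z" unfolding e_def[abs_def] LIM_zero_iff .
  then show ?thesis by (rule LIMSEQ_imp_Suc)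
qed

section \<open>Sup norm, p-norms and standardized vectors\<close>

lemma supnorm_eq_infnorm: "supnorm x = infnorm x"
proof -
  have "{\<bar>x$i\<bar> |i. i \<in> UNIV} = range (\<lambda>i. \<bar>x$i\<bar>)" by auto
  then show ?thesis unfolding supnorm_def infnorm_cart by (simp add: cSup_eq_Max)
qed

lemma supnorm_le_iff: "supnorm x \<le> b \<longleftrightarrow> (\<forall>i. \<bar>x$i\<bar> \<le> b)"
  unfolding supnorm_def by (subst Max_le_iff) auto

lemma component_le_supnorm: "\<bar>x$i\<bar> \<le> supnorm x"
  unfolding supnorm_eq_infnorm by (rule component_le_infnorm_cart)

lemma nonconstant_iff: "nonconstant x \<longleftrightarrow> (\<exists>i j. x$i \<noteq> x$j)"
  unfolding nonconstant_def by (metis vec_lambda_beta vec_lambda_unique)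

lemma pnorm_scale:
  assumes "1 \<le> p"
  shows "pnorm p (s *\<^sub>R x) = \<bar>s\<bar> * pnorm p x"
proof (cases "p = \<infinity>")
  case True
  then show ?thesis unfolding pnorm_def supnorm_eq_infnorm by (simp add: infnorm_mul)
next
  case False
  define q where "q = real_of_ereal p"
  have "1 \<le> q" using assms False unfolding q_def by (cases p) auto
  have "(\<Sum>i\<in>UNIV. \<bar>(s *\<^sub>R x)$i\<bar> powr q) = \<bar>s\<bar> powr q * (\<Sum>i\<in>UNIV. \<bar>x$i\<bar> powr q)"
    unfolding sum_distrib_left by (rule sum.cong) (simp_all add: abs_mult powr_mult)
  then have "pnorm p (s *\<^sub>R x) = (\<bar>s\<bar> powr q * (\<Sum>i\<in>UNIV. \<bar>x$i\<bar> powr q)) powr (1 / q)"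
    unfolding pnorm_def q_def using False by simp
  also have "\<dots> = (\<bar>s\<bar> powr q) powr (1 / q) * (\<Sum>i\<in>UNIV. \<bar>x$i\<bar> powr q) powr (1 / q)"
    by (rule powr_mult; auto intro: sum_nonneg)
  also have "(\<bar>s\<bar> powr q) powr (1 / q) = \<bar>s\<bar>"
    using \<open>1 \<le> q\<close> by (simp add: powr_powr)
  finally show ?thesis unfolding pnorm_def q_def using False by simp
qed

lemma supnorm_le_pnorm:
  assumes "1 \<le> p"
  shows "supnorm x \<le> pnorm p x"
proof (cases "p = \<infinity>")
  case True
  then show ?thesis unfolding pnorm_def by simp
next
  case False
  define q where "q = real_of_ereal p"
  have "1 \<le> q" using assms False unfolding q_def by (cases p) auto
  have "\<bar>x$i\<bar> \<le> (\<Sum>i\<in>UNIV. \<bar>x$i\<bar> powr q) powr (1 / q)" for i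
  proof -
    have "\<bar>x$i\<bar> = (\<bar>x$i\<bar> powr q) powr (1 / q)" using \<open>1 \<le> q\<close> by (simp add: powr_powr)
    also have "\<dots> \<le> (\<Sum>i\<in>UNIV. \<bar>x$i\<bar> powr q) powr (1 / q)"
      using \<open>1 \<le> q\<close> by (intro powr_mono2 member_le_sum) auto
    finally show ?thesis .
  qed
  then show ?thesis unfolding pnorm_def q_def supnorm_le_iff using False by simp
qed

lemma supnorm_le_1_if_Omega: "1 \<le> p \<Longrightarrow> x \<in> Omega p \<Longrightarrow> supnorm x \<le> 1"
  using supnorm_le_pnorm[of p x] by (auto simp: Omega_def Omega1_def Omega2_def)

lemma nonconstant_if_Omega:
  assumes "1 \<le> p" and "x \<in> Omega p"
  shows "nonconstant x"
proof (rule ccontr)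
  assume "\<not> nonconstant x"
  then obtain t where t: "x = (\<chi> i. t)" unfolding nonconstant_def by blast
  then have "range (\<lambda>i. x$i) = {t}" "range (\<lambda>i. \<bar>x$i\<bar>) = {\<bar>t\<bar>}" by auto
  with assms(2) have "t = 0" by (auto simp: Omega_def Omega1_def Omega2_def)
  with t have "x = 0 *\<^sub>R x" by (simp add: vec_eq_iff)
  then have "pnorm p x = 0" using pnorm_scale[OF assms(1), of 0 x] by simp
  with assms(2) show False by (simp add: Omega_def Omega1_def Omega2_def)
qed

definition standardized :: "(real^'n::finite) set" where
  "standardized = {x. (\<forall>i. \<bar>x$i\<bar> \<le> 1) \<and> (\<exists>i. x$i = 1) \<and> (\<exists>j. x$j = -1)}"

lemma nonconstant_if_standardized:
  assumes "x \<in> standardized"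
  shows "nonconstant x"
proof -
  obtain i j where "x$i = 1" "x$j = -1" using assms unfolding standardized_def by blast
  then show ?thesis unfolding nonconstant_iff by (metis one_neq_neg_one)
qed

lemma compact_standardized: "compact standardized"
proof -
  have "standardized = cbox (-1) 1 \<inter> (\<Union>i. {x. x$i = 1}) \<inter> (\<Union>j. {x. x$j = -1})"
    by (auto simp: standardized_def mem_box_cart abs_le_iff)
  moreover have "closed (\<Union>i. {x::real^'n. x$i = c})" for c
    by (intro closed_UN) (auto intro!: closed_Collect_eq continuous_intros)
  ultimately show ?thesis by (metis compact_Int_closed compact_cbox)
qed

lemma pnorm_ge_1_if_standardized:
  assumes "1 \<le> p" and "x \<in> standardized"
  shows "1 \<le> pnorm p x"
proof -
  obtain i where "x$i = 1" using assms(2) unfolding standardized_def by blast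
  then show ?thesis using component_le_supnorm[of x i] supnorm_le_pnorm[OF assms(1), of x] by simp
qed

lemma standardized_scale_in_Omega1:
  assumes "1 \<le> p" and "x \<in> standardized"
  shows "(1 / pnorm p x) *\<^sub>R x \<in> Omega1 p"
proof -
  obtain i j where x: "\<And>k. \<bar>x$k\<bar> \<le> 1" "x$i = 1" "x$j = -1"
    using assms(2) unfolding standardized_def by blast
  define c where "c = 1 / pnorm p x"
  have "0 < c" using pnorm_ge_1_if_standardized[OF assms] by (simp add: c_def)
  have bounds: "- c \<le> c * x$k" "c * x$k \<le> c" for k
    using mult_left_mono[of "-1" "x$k" c] mult_left_mono[of "x$k" 1 c] x(1)[of k] \<open>0 < c\<close>
    by (simp_all add: abs_le_iff)
  have "Max (range (\<lambda>k. (c *\<^sub>R x)$k)) = c"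
    using bounds x(2) by (intro Max_eqI) (auto intro: image_eqI[where x=i])
  moreover have "Min (range (\<lambda>k. (c *\<^sub>R x)$k)) = - c"
    using bounds x(3) by (intro Min_eqI) (auto intro: image_eqI[where x=j])
  moreover have "pnorm p (c *\<^sub>R x) = 1"
    using pnorm_ge_1_if_standardized[OF assms] by (simp add: pnorm_scale[OF assms(1)] c_def)
  ultimately show ?thesis unfolding Omega1_def c_def by simp
qed

section \<open>Degree sums and the functionals I and J\<close>

lemma sum_outdeg: "(\<Sum>v\<in>UNIV. outdeg A w v) = (\<Sum>(i, j)\<in>A. w i j)"
proof -
  have "(\<Sum>v\<in>UNIV. outdeg A w v) = (\<Sum>(i, j)\<in>Sigma UNIV (\<lambda>i. {j. (i, j) \<in> A}). w i j)"
    unfolding outdeg_def by (rule sum.Sigma) auto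
  also have "Sigma UNIV (\<lambda>i. {j. (i, j) \<in> A}) = A" by auto
  finally show ?thesis .
qed

lemma sum_indeg: "(\<Sum>v\<in>UNIV. indeg A w v) = (\<Sum>(i, j)\<in>A. w i j)"
proof -
  have "(\<Sum>v\<in>UNIV. indeg A w v) = (\<Sum>(j, i)\<in>Sigma UNIV (\<lambda>j. {i. (i, j) \<in> A}). w i j)"
    unfolding indeg_def by (rule sum.Sigma) auto
  also have "Sigma UNIV (\<lambda>j. {i. (i, j) \<in> A}) = prod.swap ` A" by force
  also have "(\<Sum>(j, i)\<in>prod.swap ` A. w i j) = (\<Sum>(i, j)\<in>A. w i j)"
    by (simp add: sum.reindex case_prod_beta comp_def)
  finally show ?thesis .
qed

lemma vol_eq_sum_weights: "vol A w = 2 * (\<Sum>(i, j)\<in>A. w i j)"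
  unfolding vol_def deg_def sum.distrib sum_outdeg sum_indeg by simp

lemma sum_degdelta: "(\<Sum>v\<in>UNIV. degdelta A w v) = 0"
  unfolding degdelta_def sum_subtractf sum_outdeg sum_indeg by simp

lemma Iplus_scale: "Iplus A w (s *\<^sub>R x) = \<bar>s\<bar> * Iplus A w x"
  unfolding Iplus_def sum_distrib_left
  by (rule sum.cong) (auto simp: abs_mult distrib_left[symmetric])

lemma Jf_scale: "Jf A w (s *\<^sub>R x) = \<bar>s\<bar> * Jf A w x"
  unfolding Jf_def by (simp add: abs_mult[symmetric] sum_distrib_left mult.left_commute)

lemma Jf_shift: "Jf A w (x - vec c) = Jf A w x"
proof -
  have "(\<Sum>i\<in>UNIV. degdelta A w i * (x - vec c)$i)
      = (\<Sum>i\<in>UNIV. degdelta A w i * x$i) - c * (\<Sum>v\<in>UNIV. degdelta A w v)"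
    by (simp add: algebra_simps sum_subtractf sum_distrib_left)
  then show ?thesis unfolding Jf_def sum_degdelta by simp
qed

lemma Iplus_shift_le:
  assumes "\<forall>(i, j)\<in>A. 0 \<le> w i j"
  shows "Iplus A w x \<le> Iplus A w (x - vec c) + vol A w * \<bar>c\<bar>"
proof -
  have "Iplus A w x \<le> (\<Sum>(i, j)\<in>A. w i j * \<bar>(x - vec c)$i + (x - vec c)$j\<bar> + w i j * (2 * \<bar>c\<bar>))"
    unfolding Iplus_def
  proof (rule sum_mono, clarify)
    fix i j assume "(i, j) \<in> A"
    then have "0 \<le> w i j" using assms by auto
    moreover have "\<bar>x$i + x$j\<bar> \<le> \<bar>(x - vec c)$i + (x - vec c)$j\<bar> + 2 * \<bar>c\<bar>"
      using abs_triangle_ineq[of "(x - vec c)$i + (x - vec c)$j" "2 * c"] by simp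
    ultimately show "w i j * \<bar>x$i + x$j\<bar>
        \<le> w i j * \<bar>(x - vec c)$i + (x - vec c)$j\<bar> + w i j * (2 * \<bar>c\<bar>)"
      by (simp add: mult_left_mono flip: distrib_left)
  qed
  also have "\<dots> = Iplus A w (x - vec c) + vol A w * \<bar>c\<bar>"
    unfolding Iplus_def vol_eq_sum_weights
    by (simp add: sum.distrib split_def sum_distrib_left sum_distrib_right mult_ac)
  finally show ?thesis .
qed

lemma continuous_on_Iplus: "continuous_on U (Iplus A w)"
  unfolding Iplus_def split_def by (intro continuous_intros)

lemma continuous_on_Jf: "continuous_on U (Jf A w)"
  unfolding Jf_def by (intro continuous_intros)

section \<open>The functionals N and r\<close>

locale weighted_digraph =
  fixes A :: "('n::finite \<times> 'n) set" and w :: "'n \<Rightarrow> 'n \<Rightarrow> real"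
  assumes weight_pos: "\<forall>(i, j)\<in>A. w i j > 0"
    and deg_pos: "\<forall>v. deg A w v > 0"
begin

lemma deg_nonneg: "0 \<le> deg A w v"
  using deg_pos less_imp_le by blast

lemma vol_pos: "0 < vol A w"
  unfolding vol_def using deg_pos by (simp add: sum_pos)

lemma Nf_le_sum: "Nf A w x \<le> (\<Sum>i\<in>UNIV. deg A w i * \<bar>x$i - c\<bar>)"
proof -
  have "bdd_below (range (\<lambda>c. \<Sum>i\<in>UNIV. deg A w i * \<bar>x$i - c\<bar>))"
    by (rule bdd_belowI[where m=0]) (auto intro: sum_nonneg simp: deg_nonneg)
  then show ?thesis unfolding Nf_def by (rule cINF_lower) simp
qed

lemma Nf_greatest: "(\<And>c. m \<le> (\<Sum>i\<in>UNIV. deg A w i * \<bar>x$i - c\<bar>)) \<Longrightarrow> m \<le> Nf A w x"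
  unfolding Nf_def by (rule cINF_greatest) blast+

lemma Nf_nonneg: "0 \<le> Nf A w x"
  by (rule Nf_greatest) (simp add: sum_nonneg deg_nonneg)

lemma Nf_affine_le:
  assumes "\<And>i. y$i = s * x$i + t"
  shows "Nf A w y \<le> \<bar>s\<bar> * Nf A w x"
proof (cases "s = 0")
  case True
  then show ?thesis using Nf_le_sum[of y t] assms by simp
next
  case False
  have "Nf A w y / \<bar>s\<bar> \<le> Nf A w x"
  proof (rule Nf_greatest)
    fix c
    have "\<And>i. y$i - (s * c + t) = s * (x$i - c)" using assms by (simp add: algebra_simps)
    then have "(\<Sum>i\<in>UNIV. deg A w i * \<bar>y$i - (s * c + t)\<bar>)
        = \<bar>s\<bar> * (\<Sum>i\<in>UNIV. deg A w i * \<bar>x$i - c\<bar>)"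
      unfolding sum_distrib_left by (intro sum.cong) (simp_all add: abs_mult mult.left_commute)
    with Nf_le_sum[of y "s * c + t"] False
    show "Nf A w y / \<bar>s\<bar> \<le> (\<Sum>i\<in>UNIV. deg A w i * \<bar>x$i - c\<bar>)"
      by (simp add: divide_le_eq mult.commute)
  qed
  then show ?thesis using False by (simp add: divide_le_eq mult.commute)
qed

lemma Nf_scale: "Nf A w (s *\<^sub>R x) = \<bar>s\<bar> * Nf A w x"
proof (cases "s = 0")
  case True
  then show ?thesis using Nf_affine_le[of 0 0 x 0] Nf_nonneg[of 0] by simp
next
  case False
  have "Nf A w (s *\<^sub>R x) \<le> \<bar>s\<bar> * Nf A w x" by (rule Nf_affine_le) simp
  moreover have "Nf A w x \<le> \<bar>1 / s\<bar> * Nf A w (s *\<^sub>R x)" by (rule Nf_affine_le) (simp add: False)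
  ultimately show ?thesis using False by (simp add: field_simps)
qed

lemma Nf_shift: "Nf A w (x - vec c) = Nf A w x"
  using Nf_affine_le[of "x - vec c" 1 x "- c"] Nf_affine_le[of x 1 "x - vec c" c] by simp

lemma Nf_pos:
  assumes "nonconstant x"
  shows "0 < Nf A w x"
proof -
  obtain a b where ab: "x$a \<noteq> x$b" using assms nonconstant_iff by blast
  define m where "m = min (deg A w a) (deg A w b)"
  have "0 < m" using deg_pos by (simp add: m_def)
  have "m * \<bar>x$a - x$b\<bar> \<le> Nf A w x"
  proof (rule Nf_greatest)
    fix c
    have "m * \<bar>x$a - x$b\<bar> \<le> m * \<bar>x$a - c\<bar> + m * \<bar>x$b - c\<bar>"
      using \<open>0 < m\<close> by (simp flip: distrib_left add: mult_left_mono)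
    also have "\<dots> \<le> deg A w a * \<bar>x$a - c\<bar> + deg A w b * \<bar>x$b - c\<bar>"
      by (intro add_mono mult_right_mono) (simp_all add: m_def)
    also have "\<dots> = (\<Sum>i\<in>{a, b}. deg A w i * \<bar>x$i - c\<bar>)"
      using ab by (cases "a = b") simp_all
    also have "\<dots> \<le> (\<Sum>i\<in>UNIV. deg A w i * \<bar>x$i - c\<bar>)"
      by (rule sum_mono2) (simp_all add: deg_nonneg)
    finally show "m * \<bar>x$a - x$b\<bar> \<le> (\<Sum>i\<in>UNIV. deg A w i * \<bar>x$i - c\<bar>)" .
  qed
  moreover have "0 < m * \<bar>x$a - x$b\<bar>" using \<open>0 < m\<close> ab by simp
  ultimately show ?thesis by linarith
qed

lemma Nf_le_vol_supnorm: "Nf A w x \<le> vol A w * supnorm x"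
proof -
  have "Nf A w x \<le> (\<Sum>i\<in>UNIV. deg A w i * \<bar>x$i - 0\<bar>)" by (rule Nf_le_sum)
  also have "\<dots> \<le> (\<Sum>i\<in>UNIV. deg A w i * supnorm x)"
    by (intro sum_mono mult_left_mono) (simp_all add: component_le_supnorm deg_nonneg)
  finally show ?thesis by (simp add: vol_def sum_distrib_right)
qed

lemma Nf_le_vol_if_Omega:
  assumes "1 \<le> p" and "x \<in> Omega p"
  shows "Nf A w x \<le> vol A w"
proof -
  have "vol A w * supnorm x \<le> vol A w"
    using supnorm_le_1_if_Omega[OF assms] vol_pos by (simp add: mult_left_le)
  then show ?thesis using Nf_le_vol_supnorm[of x] by linarith
qed

lemma lipschitz_on_Nf: "(vol A w)-lipschitz_on U (Nf A w)"
proof -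
  have Nf_le_Nf: "Nf A w x \<le> Nf A w y + vol A w * dist x y" for x y :: "real^'n"
  proof -
    have "Nf A w x - vol A w * dist x y \<le> Nf A w y"
    proof (rule Nf_greatest)
      fix c
      have "\<bar>x$i - c\<bar> \<le> \<bar>y$i - c\<bar> + dist x y" for i
        using abs_triangle_ineq[of "y$i - c" "x$i - y$i"] component_le_norm_cart[of "x - y" i]
        by (simp add: dist_norm)
      then have "(\<Sum>i\<in>UNIV. deg A w i * \<bar>x$i - c\<bar>) \<le> (\<Sum>i\<in>UNIV. deg A w i * (\<bar>y$i - c\<bar> + dist x y))"
        by (intro sum_mono mult_left_mono) (simp_all add: deg_nonneg)
      also have "\<dots> = (\<Sum>i\<in>UNIV. deg A w i * \<bar>y$i - c\<bar>) + vol A w * dist x y"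
        by (simp add: vol_def distrib_left sum.distrib sum_distrib_right)
      finally show "Nf A w x - vol A w * dist x y \<le> (\<Sum>i\<in>UNIV. deg A w i * \<bar>y$i - c\<bar>)"
        using Nf_le_sum[of x c] by linarith
    qed
    then show ?thesis by linarith
  qed
  show ?thesis
  proof (rule lipschitz_onI)
    fix x y :: "real^'n"
    show "dist (Nf A w x) (Nf A w y) \<le> vol A w * dist x y"
      using Nf_le_Nf[of x y] Nf_le_Nf[of y x] by (simp add: dist_real_def dist_commute abs_le_iff)
    show "0 \<le> vol A w" using vol_pos by simp
  qed
qed

lemma continuous_on_rf: "continuous_on {x. nonconstant x} (rf A w)"
  unfolding rf_def[abs_def] supnorm_eq_infnorm
  by (intro continuous_intros continuous_on_Iplus continuous_on_Jf
        lipschitz_on_continuous_on[OF lipschitz_on_Nf])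
     (auto dest: Nf_pos)

lemma rf_scale:
  assumes "s \<noteq> 0"
  shows "rf A w (s *\<^sub>R x) = rf A w x"
proof -
  have "rf A w (s *\<^sub>R x)
      = (\<bar>s\<bar> * (vol A w * supnorm x - Iplus A w x - Jf A w x)) / (\<bar>s\<bar> * (2 * Nf A w x))"
    unfolding rf_def supnorm_eq_infnorm infnorm_mul Iplus_scale Jf_scale Nf_scale
    by (simp only: right_diff_distrib mult.left_commute)
  then show ?thesis unfolding rf_def using assms by simp
qed

lemma rf_shift_le:
  assumes "nonconstant y" and "supnorm (y - vec h) + \<bar>h\<bar> \<le> supnorm y"
  shows "rf A w (y - vec h) \<le> rf A w y"
proof -
  have "Iplus A w y \<le> Iplus A w (y - vec h) + vol A w * \<bar>h\<bar>"
    using weight_pos by (intro Iplus_shift_le) auto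
  moreover have "vol A w * (supnorm (y - vec h) + \<bar>h\<bar>) \<le> vol A w * supnorm y"
    using assms(2) vol_pos by (simp add: mult_left_mono)
  ultimately have "vol A w * supnorm (y - vec h) - Iplus A w (y - vec h) - Jf A w (y - vec h)
      \<le> vol A w * supnorm y - Iplus A w y - Jf A w y"
    by (simp add: Jf_shift distrib_left)
  then show ?thesis
    unfolding rf_def Nf_shift using Nf_pos[OF assms(1)] by (simp add: divide_right_mono)
qed

text \<open>Centring y at the midpoint h of its range lowers the sup norm by at least |h|, which pays
  for the increase of I by at most vol * |h|; rescaling the range to [-1, 1] leaves r unchanged.\<close>
lemma ex_standardized_rf_le:
  assumes "nonconstant y"
  shows "\<exists>z\<in>standardized. rf A w z \<le> rf A w y"
proof -
  define M where "M = Max (range (\<lambda>i. y$i))"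
  define m where "m = Min (range (\<lambda>i. y$i))"
  have "M \<in> range (\<lambda>i. y$i)" "m \<in> range (\<lambda>i. y$i)"
    unfolding M_def m_def by (intro Max_in Min_in; simp)+
  then obtain j k where jk: "y$j = M" "y$k = m" by auto
  have bounds: "m \<le> y$i" "y$i \<le> M" for i
    unfolding M_def m_def by simp_all
  have "m < M"
  proof -
    obtain a b where "y$a \<noteq> y$b" using assms unfolding nonconstant_iff by blast
    then show ?thesis using bounds[of a] bounds[of b] by linarith
  qed
  define h where "h = (M + m) / 2"
  define s where "s = 2 / (M - m)"
  have "0 < s" using \<open>m < M\<close> by (simp add: s_def)
  have dist_h: "\<bar>y$i - h\<bar> \<le> (M - m) / 2" for i
    unfolding h_def abs_le_iff using bounds[of i] by (simp add: field_simps)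
  have "s *\<^sub>R (y - vec h) \<in> standardized"
    unfolding standardized_def
  proof (intro CollectI conjI allI exI)
    fix i
    have "\<bar>s * (y$i - h)\<bar> \<le> s * ((M - m) / 2)"
      using dist_h[of i] \<open>0 < s\<close> by (simp add: abs_mult mult_left_mono)
    also have "\<dots> = 1" using \<open>m < M\<close> by (simp add: s_def)
    finally show "\<bar>(s *\<^sub>R (y - vec h))$i\<bar> \<le> 1" by simp
    show "(s *\<^sub>R (y - vec h))$j = 1" "(s *\<^sub>R (y - vec h))$k = -1"
      using jk \<open>m < M\<close> by (simp_all add: s_def h_def divide_simps)
  qed
  moreover have "rf A w (s *\<^sub>R (y - vec h)) = rf A w (y - vec h)"
    using \<open>0 < s\<close> by (intro rf_scale) simp
  moreover have "supnorm (y - vec h) + \<bar>h\<bar> \<le> supnorm y"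
  proof -
    have "supnorm (y - vec h) \<le> (M - m) / 2"
      unfolding supnorm_le_iff using dist_h by simp
    moreover have "M \<le> supnorm y" "- m \<le> supnorm y"
      using component_le_supnorm[of y j] component_le_supnorm[of y k] jk by (simp_all add: abs_le_iff)
    then have "(M - m) / 2 + \<bar>h\<bar> \<le> supnorm y"
      unfolding h_def by (cases "0 \<le> M + m") (simp_all add: abs_of_nonneg abs_of_neg field_simps)
    ultimately show ?thesis by linarith
  qed
  then have "rf A w (y - vec h) \<le> rf A w y" by (rule rf_shift_le[OF assms])
  ultimately show ?thesis by (intro bexI[of _ "s *\<^sub>R (y - vec h)"]) simp_all
qed

lemma rf_attains_min:
  fixes y0 :: "real^'n"
  assumes "nonconstant y0"
  shows "\<exists>z\<in>standardized. \<forall>y. nonconstant y \<longrightarrow> rf A w z \<le> rf A w y"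
proof -
  have "(standardized :: (real^'n) set) \<noteq> {}" using ex_standardized_rf_le[OF assms] by blast
  moreover have "continuous_on standardized (rf A w)"
    by (rule continuous_on_subset[OF continuous_on_rf]) (auto intro: nonconstant_if_standardized)
  ultimately obtain z where "z \<in> standardized" and z_min: "\<forall>x\<in>standardized. rf A w z \<le> rf A w x"
    using continuous_attains_inf[OF compact_standardized] by blast
  have "rf A w z \<le> rf A w y" if y: "nonconstant y" for y
  proof -
    obtain x where "x \<in> standardized" "rf A w x \<le> rf A w y" using ex_standardized_rf_le[OF y] by blast
    with z_min show ?thesis by (meson order_trans)
  qed
  with \<open>z \<in> standardized\<close> show ?thesis by blast
qed

lemma rf_attains_min_on_Omega1:
  fixes y0 :: "real^'n"
  assumes "1 \<le> p" and "nonconstant y0"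
  shows "\<exists>z\<in>Omega1 p. \<forall>y. nonconstant y \<longrightarrow> rf A w z \<le> rf A w y"
proof -
  obtain z where "z \<in> standardized" and "\<forall>y. nonconstant y \<longrightarrow> rf A w z \<le> rf A w y"
    using rf_attains_min[OF assms(2)] by blast
  moreover have "0 < pnorm p z"
    using pnorm_ge_1_if_standardized[OF assms(1) \<open>z \<in> standardized\<close>] by simp
  ultimately show ?thesis
    using standardized_scale_in_Omega1[OF assms(1)] rf_scale[of "1 / pnorm p z" z]
    by (intro bexI[of _ "(1 / pnorm p z) *\<^sub>R z"]) auto
qed

lemma supnorm_minus_Qf_eq:
  assumes "nonconstant x"
  shows "supnorm x - Qf A w r x = (2 * Nf A w x / vol A w) * (rf A w x - r)"
  using Nf_pos[OF assms] vol_pos unfolding Qf_def rf_def by (simp add: field_simps)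

end

theorem theorem3p1:
  fixes A :: "('n::finite \<times> 'n) set" and w :: "'n \<Rightarrow> 'n \<Rightarrow> real"
    and p :: ereal and xs :: "nat \<Rightarrow> real^'n"
  assumes wpos: "\<forall>(i, j)\<in>A. w i j > 0"
    and degpos: "\<forall>v. deg A w v > 0"
    and p1: "1 \<le> p"
    and init: "xs 1 \<in> Omega p"
    and iter: "\<forall>k\<ge>1. is_arg_min (\<lambda>x. supnorm x - Qf A w (rf A w (xs k)) x)
                                 (\<lambda>x. x \<in> Omega p) (xs (Suc k))"
  shows "\<exists>x0. nonconstant x0 \<and> (\<forall>y. nonconstant y \<longrightarrow> rf A w x0 \<le> rf A w y)
           \<and> (\<lambda>k. rf A w (xs k)) \<longlonglongrightarrow> rf A w x0"
proof -
  interpret weighted_digraph A w using wpos degpos by unfold_locales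
  note Omega_nonconstant = nonconstant_if_Omega[OF p1]
  obtain z where "z \<in> Omega1 p" and z_min: "\<forall>y. nonconstant y \<longrightarrow> rf A w z \<le> rf A w y"
    using rf_attains_min_on_Omega1[OF p1 Omega_nonconstant[OF init]] by blast
  then have "z \<in> Omega p" by (simp add: Omega_def)
  have "(\<lambda>k. rf A w (xs k)) \<longlonglongrightarrow> rf A w z"
  proof (rule dinkelbach_LIMSEQ[where \<delta> = "\<lambda>x. 2 * Nf A w x / vol A w" and D = 2,
        OF _ _ _ \<open>z \<in> Omega p\<close> _ init iter])
    fix x :: "real^'n" assume "x \<in> Omega p"
    then have "nonconstant x" by (rule Omega_nonconstant)
    show "supnorm x - Qf A w r x = 2 * Nf A w x / vol A w * (rf A w x - r)" for r
      by (rule supnorm_minus_Qf_eq[OF \<open>nonconstant x\<close>])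
    show "0 < 2 * Nf A w x / vol A w"
      using Nf_pos[OF \<open>nonconstant x\<close>] vol_pos by simp
    show "2 * Nf A w x / vol A w \<le> 2"
      using Nf_le_vol_if_Omega[OF p1 \<open>x \<in> Omega p\<close>] vol_pos by (simp add: divide_le_eq)
    show "rf A w z \<le> rf A w x" using z_min \<open>nonconstant x\<close> by blast
  qed
  with z_min Omega_nonconstant[OF \<open>z \<in> Omega p\<close>] show ?thesis by blast
qed

end
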